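(* Let $p$ be a prime with $p\notin\{2,3,7,43\}$, and let $n$ be a positive integer divisible by $p$. Then $n\in\mathcal{M}_p^{(1)}$ if and only if $n/p\in\mathcal{W}$, $\mathfrak{n}_{n/p}\mid p$, and $\mathfrak{n}_{n/p}-1\nmid n/p$.
   Context: For positive integers $k,n$ let $S_k(n)=\sum_{i=1}^{n} i^k$. For an integer $a$, $\mathcal{M}_a$ denotes the set of positive integers $n$ such that $S_n(n)\equiv a\pmod{n}$. For a prime $p$, $\mathcal{M}_p^{(1)}=\{n\in\mathcal{M}_p : p\mid n,\ p^2\nmid n\}$. A positive integer $n$ is a weak primary pseudoperfect number if $\sum_{q\mid n,\ q\text{ prime}} \frac{n}{q}+1\equiv 0\pmod{n}$; $\mathcal{W}$ denotes the set of such numbers. For a positive integer $Q$, $\mathfrak{n}_Q=\operatorname{lcm}\{(q-1)/\gcd(q-1,Q) : q\text{ prime},\ q\mid Q\}$ if $Q\neq 1$, and $\mathfrak{n}_1=1$. *)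

theory Defs
  imports "HOL-Number_Theory.Number_Theory"
begin

definition S :: "nat \<Rightarrow> nat \<Rightarrow> nat" where
  "S k n = (\<Sum>i=1..n. i ^ k)"

definition M :: "int \<Rightarrow> nat set" where
  "M a = {n. n > 0 \<and> [int (S n n) = a] (mod int n)}"

definition M1 :: "nat \<Rightarrow> nat set" where
  "M1 p = {n \<in> M (int p). p dvd n \<and> \<not> p^2 dvd n}"

definition W :: "nat set" where
  "W = {n. n > 0 \<and> [(\<Sum>q\<in>prime_factors n. n div q) + 1 = 0] (mod n)}"

definition frakn :: "nat \<Rightarrow> nat" where
  "frakn Q = (if Q = 1 then 1
     else Lcm ((\<lambda>q. (q - 1) div gcd (q - 1) Q) ` prime_factors Q))"

end

theory Submission
  imports Defs "HOL-Computational_Algebra.Squarefree"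
begin

text \<open>Modulo a prime \<open>q\<close>, the power sum \<open>S\<^sub>k(q)\<close> with \<open>k > 0\<close> is \<open>-1\<close> if \<open>q - 1 | k\<close>
  and \<open>0\<close> otherwise, and \<open>S\<^sub>k(n) \<equiv> (n/q) S\<^sub>k(q)\<close> whenever \<open>q | n\<close>. For \<open>n = pQ\<close> the
  congruence \<open>S\<^sub>n(n) \<equiv> p (mod n)\<close> therefore forces \<open>n\<close> to be squarefree and splits into one
  condition per prime: \<open>p - 1\<close> does not divide \<open>Q\<close> at \<open>p\<close>, and \<open>q - 1 | pQ\<close>, \<open>q | Q/q + 1\<close>
  at each prime \<open>q | Q\<close>. The conditions at the primes of \<open>Q\<close> say exactly \<open>frakn Q | p\<close> and
  \<open>Q \<in> W\<close>. It remains to see that \<open>p | Q\<close>, or \<open>p - 1 | Q\<close> when \<open>frakn Q = 1\<close>, forces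
  \<open>p \<in> {2, 3, 7, 43}\<close>: then every small prime \<open>r | Q\<close> has \<open>r - 1 | Q\<close>, and by induction on
  \<open>r\<close> all these primes, and finally \<open>p\<close>, lie among \<open>2, 3, 7, 43\<close>, the primes \<open>r\<close> with
  \<open>r - 1 | 2\<cdot>3\<cdot>7\<cdot>43\<close>.\<close>

lemma S_mult_cong:
  fixes k q t :: nat
  shows "[S k (q * t) = t * S k q] (mod q)"
proof (induction t)
  case 0
  then show ?case by (simp add: S_def)
next
  case (Suc t)
  have "S k (q * Suc t) = (\<Sum>i=1..q*t+q. i ^ k)"
    by (simp add: S_def add.commute)
  also have "\<dots> = S k (q * t) + (\<Sum>i=q*t+1..q*t+q. i ^ k)"
    unfolding S_def by (rule sum.ub_add_nat) simp
  also have "(\<Sum>i=q*t+1..q*t+q. i ^ k) = (\<Sum>i=1..q. (i + q * t) ^ k)"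
    using sum.shift_bounds_cl_nat_ivl[of "\<lambda>i. i ^ k" 1 "q * t" q] by (simp add: add.commute)
  finally have split: "S k (q * Suc t) = S k (q * t) + (\<Sum>i=1..q. (i + q * t) ^ k)" .
  have "[(\<Sum>i=1..q. (i + q * t) ^ k) = S k q] (mod q)"
    unfolding S_def by (intro cong_sum cong_pow) (simp add: cong_def)
  from cong_add[OF Suc.IH this]
  have "[S k (q * t) + (\<Sum>i=1..q. (i + q * t) ^ k) = Suc t * S k q] (mod q)"
    by (simp add: add.commute)
  then show ?case by (simp only: split)
qed

lemma power_sum_units_scale_cong:
  fixes q a k :: nat
  assumes q: "prime q" and a: "\<not> q dvd a"
  shows "[(\<Sum>i=1..q-1. (a * i) ^ k) = (\<Sum>i=1..q-1. i ^ k)] (mod q)"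
proof -
  let ?A = "{1..q-1}"
  define f where "f i = a * i mod q" for i
  have unit: "\<not> q dvd i" if "i \<in> ?A" for i
    using that nat_dvd_not_less by force
  have "f ` ?A \<subseteq> ?A"
  proof
    fix j assume "j \<in> f ` ?A"
    then obtain i where i: "i \<in> ?A" "j = f i" by blast
    have "\<not> q dvd a * i" using q a unit[OF i(1)] prime_dvd_mult_iff by blast
    then have "0 < f i" by (simp add: f_def dvd_eq_mod_eq_0)
    moreover have "f i < q" using prime_gt_0_nat[OF q] by (simp add: f_def)
    ultimately show "j \<in> ?A" using i(2) by simp
  qed
  moreover have "inj_on f ?A"
  proof
    fix i j assume ij: "i \<in> ?A" "j \<in> ?A" "f i = f j"
    have "coprime a q"
      using prime_imp_coprime[OF q a] by (simp add: coprime_commute)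
    moreover from ij(3) have "[a * i = a * j] (mod q)"
      by (simp add: f_def cong_def)
    ultimately have "[i = j] (mod q)"
      by (simp only: cong_mult_lcancel_nat)
    moreover have "i < q" "j < q" using ij(1,2) prime_gt_0_nat[OF q] by auto
    ultimately show "i = j" by (rule cong_less_modulus_unique_nat)
  qed
  ultimately have "bij_betw f ?A ?A"
    by (simp add: bij_betw_def endo_inj_surj)
  then have "(\<Sum>i\<in>?A. f i ^ k) = (\<Sum>i\<in>?A. i ^ k)"
    by (rule sum.reindex_bij_betw)
  moreover have "[(\<Sum>i\<in>?A. (a * i) ^ k) = (\<Sum>i\<in>?A. f i ^ k)] (mod q)"
    by (intro cong_sum cong_pow) (simp add: f_def cong_def)
  ultimately show ?thesis by simp
qed

lemma power_sum_units_cong_pred: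
  fixes q k :: nat
  assumes "prime q" "(q - 1) dvd k"
  shows "[(\<Sum>i=1..q-1. i ^ k) = q - 1] (mod q)"
proof -
  obtain c where c: "k = (q - 1) * c" using assms(2) by blast
  have "[(\<Sum>i=1..q-1. i ^ k) = (\<Sum>i=1..q-1. 1)] (mod q)"
  proof (rule cong_sum)
    fix i assume "i \<in> {1..q-1}"
    then have "\<not> q dvd i" using nat_dvd_not_less by force
    then have "[i ^ (q - 1) = 1] (mod q)" using fermat_theorem assms(1) by blast
    then show "[i ^ k = 1] (mod q)" unfolding c power_mult by (metis cong_pow power_one)
  qed
  then show ?thesis by simp
qed

text \<open>Scaling by a primitive root \<open>a\<close> permutes the units, so the power sum \<open>T\<close> satisfies
  \<open>a\<^sup>k T \<equiv> T\<close>, while \<open>a\<^sup>k \<not>\<equiv> 1\<close>.\<close>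
lemma prime_dvd_power_sum_units:
  fixes q k :: nat
  assumes q: "prime q" and k: "\<not> (q - 1) dvd k"
  shows "q dvd (\<Sum>i=1..q-1. i ^ k)"
proof (rule ccontr)
  define T where "T = (\<Sum>i=1..q-1. i ^ k)"
  assume "\<not> q dvd T"
  then have T: "coprime T q"
    using prime_imp_coprime[OF q] by (simp add: coprime_commute)
  obtain a where a: "a \<in> totatives q" "ord q a = q - 1"
    using residue_prime_has_primroot[OF q] by blast
  have "\<not> q dvd a"
    using a(1) q by (auto simp: totatives_def dest: dvd_imp_le)
  from power_sum_units_scale_cong[OF q this, of k]
  have "[a ^ k * T = 1 * T] (mod q)"
    by (simp add: T_def power_mult_distrib sum_distrib_left)
  then have "[a ^ k = 1] (mod q)"
    using T by (simp only: cong_mult_rcancel_nat)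
  then have "ord q a dvd k"
    by (simp only: ord_divides)
  with k a(2) show False by simp
qed

lemma S_prime_cong:
  fixes q k :: nat
  assumes q: "prime q" and k: "k > 0"
  shows "[S k q = (if (q - 1) dvd k then q - 1 else 0)] (mod q)"
proof -
  have "S k q = (\<Sum>i=1..q-1. i ^ k) + q ^ k"
    using prime_gt_0_nat[OF q] by (cases q) (simp_all add: S_def)
  moreover have "[(\<Sum>i=1..q-1. i ^ k) + q ^ k = (if (q - 1) dvd k then q - 1 else 0) + 0] (mod q)"
  proof (rule cong_add)
    show "[(\<Sum>i=1..q-1. i ^ k) = (if (q - 1) dvd k then q - 1 else 0)] (mod q)"
      using power_sum_units_cong_pred[OF q] prime_dvd_power_sum_units[OF q]
      by (simp add: cong_0_iff)
    show "[q ^ k = 0] (mod q)"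
      using k by (simp add: cong_0_iff)
  qed
  ultimately show ?thesis by simp
qed

lemma S_self_cong:
  fixes n q :: nat
  assumes q: "prime q" and qn: "q dvd n" and n: "n > 0"
  shows "[S n n = (n div q) * (if (q - 1) dvd n then q - 1 else 0)] (mod q)"
proof -
  have "[S n n = (n div q) * S n q] (mod q)"
    using S_mult_cong[of n q "n div q"] qn by simp
  also have "[(n div q) * S n q = (n div q) * (if (q - 1) dvd n then q - 1 else 0)] (mod q)"
    using S_prime_cong[OF q n] by (rule cong_scalar_left)
  finally show ?thesis .
qed

lemma squarefree_dvd_iff_prime_dvd:
  fixes n m :: "'a :: factorial_semiring"
  assumes sq: "squarefree n"
  shows "n dvd m \<longleftrightarrow> (\<forall>p. prime p \<longrightarrow> p dvd n \<longrightarrow> p dvd m)"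
proof
  assume primes: "\<forall>p. prime p \<longrightarrow> p dvd n \<longrightarrow> p dvd m"
  have n: "n \<noteq> 0" using sq by auto
  show "n dvd m"
  proof (cases "m = 0")
    case False
    show ?thesis
    proof (rule multiplicity_le_imp_dvd[OF n])
      fix p :: 'a assume p: "prime p"
      have "multiplicity p n \<le> 1"
        using sq n p squarefree_factorial_semiring'' by blast
      show "multiplicity p n \<le> multiplicity p m"
      proof (cases "p dvd n")
        case True
        then have "multiplicity p m > 0"
          using primes p False by (simp add: prime_multiplicity_gt_zero_iff)
        with \<open>multiplicity p n \<le> 1\<close> show ?thesis by linarith
      qed (simp add: not_dvd_imp_multiplicity_0)
    qed
  qed simp
qed (blast intro: dvd_trans)

lemma squarefree_cong_iff_prime_cong:
  fixes n a b :: nat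
  assumes "squarefree n"
  shows "[a = b] (mod n) \<longleftrightarrow> (\<forall>q. prime q \<longrightarrow> q dvd n \<longrightarrow> [a = b] (mod q))"
proof -
  have ordered: "[x = y] (mod n) \<longleftrightarrow> (\<forall>q. prime q \<longrightarrow> q dvd n \<longrightarrow> [x = y] (mod q))"
    if "y \<le> x" for x y
    using that squarefree_dvd_iff_prime_dvd[OF assms] by (simp add: cong_altdef_nat)
  show ?thesis
    using ordered[of a b] ordered[of b a] cong_sym_eq[of a b] by (metis nat_le_linear)
qed

lemma squarefree_prime_mult_iff:
  fixes p Q :: nat
  assumes p: "prime p"
  shows "squarefree (p * Q) \<longleftrightarrow> squarefree Q \<and> \<not> p dvd Q"
proof
  assume sq: "squarefree (p * Q)"
  have "\<not> p dvd Q"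
  proof
    assume "p dvd Q"
    then have "p ^ 2 dvd p * Q" by (simp add: power2_eq_square)
    with sq p show False by (auto dest: squarefreeD)
  qed
  with squarefree_multD(2)[OF sq] show "squarefree Q \<and> \<not> p dvd Q" by blast
next
  assume "squarefree Q \<and> \<not> p dvd Q"
  then show "squarefree (p * Q)"
    using squarefree_mult_coprime[of p Q] squarefree_prime[OF p] prime_imp_coprime[OF p] by blast
qed

lemma prime_dvd_cofactor:
  fixes Q q r :: nat
  assumes "prime q" "q dvd Q" "prime r" "r dvd Q" "r \<noteq> q"
  shows "q dvd Q div r"
proof -
  have "coprime q r" using assms by (simp add: primes_coprime)
  then have "q * r dvd Q" using assms(2,4) divides_mult by blast
  then obtain c where "Q = q * r * c" by blast
  then show ?thesis using prime_gt_0_nat[OF assms(3)] by simp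
qed

lemma W_iff:
  fixes Q :: nat
  assumes Q: "Q > 0"
  shows "Q \<in> W \<longleftrightarrow> squarefree Q \<and> (\<forall>q. prime q \<longrightarrow> q dvd Q \<longrightarrow> q dvd Q div q + 1)"
proof -
  define \<Sigma> where "\<Sigma> = (\<Sum>r\<in>prime_factors Q. Q div r)"
  have W: "Q \<in> W \<longleftrightarrow> Q dvd \<Sigma> + 1"
    using Q by (simp add: W_def \<Sigma>_def cong_0_iff)
  have local: "q dvd \<Sigma> + 1 \<longleftrightarrow> q dvd Q div q + 1" if q: "prime q" "q dvd Q" for q
  proof -
    have "\<Sigma> + 1 = (Q div q + 1) + (\<Sum>r\<in>prime_factors Q - {q}. Q div r)"
      using q Q by (simp add: \<Sigma>_def sum.remove in_prime_factors_iff)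
    moreover have "q dvd (\<Sum>r\<in>prime_factors Q - {q}. Q div r)"
      using q by (intro dvd_sum prime_dvd_cofactor) auto
    ultimately show ?thesis by (metis dvd_add_left_iff)
  qed
  have "squarefree Q" if local_conds: "\<forall>q. prime q \<longrightarrow> q dvd Q \<longrightarrow> q dvd Q div q + 1"
  proof -
    have "\<not> q ^ 2 dvd Q" if q: "prime q" for q
    proof
      assume sq: "q ^ 2 dvd Q"
      then have "q dvd Q" by (meson dvd_power dvd_trans prime_gt_0_nat[OF q] zero_less_numeral)
      moreover from sq obtain c where "Q = q ^ 2 * c" by blast
      then have "q dvd Q div q" using prime_gt_0_nat[OF q] by (simp add: power2_eq_square)
      ultimately have "q dvd 1" using local_conds q by (metis dvd_add_right_iff)
      with q show False by simp
    qed
    then show ?thesis using Q by (subst squarefree_factorial_semiring) auto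
  qed
  then show ?thesis
    using W local squarefree_dvd_iff_prime_dvd by (meson dvd_trans)
qed

lemma div_gcd_dvd_iff:
  fixes a b c :: nat
  assumes "c > 0"
  shows "a div gcd a c dvd b \<longleftrightarrow> a dvd b * c"
proof -
  define g where "g = gcd a c"
  obtain a' c' where a: "a = g * a'" and c: "c = g * c'"
    unfolding g_def by (meson dvd_def gcd_dvd1 gcd_dvd2)
  have g: "g > 0" using assms by (simp add: g_def)
  have "coprime (a div g) (c div g)"
    using div_gcd_coprime[of a c] assms by (simp add: g_def)
  then have "coprime a' c'" using a c g by simp
  moreover have "a div g = a'" using a g by simp
  moreover have "a dvd b * c \<longleftrightarrow> a' dvd b * c'" using a c g by (simp add: mult.left_commute)
  ultimately show ?thesis by (simp add: coprime_dvd_mult_left_iff flip: g_def)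
qed

lemma frakn_dvd_iff:
  fixes Q m :: nat
  assumes Q: "Q > 0"
  shows "frakn Q dvd m \<longleftrightarrow> (\<forall>q. prime q \<longrightarrow> q dvd Q \<longrightarrow> (q - 1) dvd m * Q)"
proof (cases "Q = 1")
  case False
  then show ?thesis
    using Q by (auto simp: frakn_def Lcm_dvd_iff in_prime_factors_iff div_gcd_dvd_iff)
qed (auto simp: frakn_def)

lemma cong_mult_pred_prime_iff:
  fixes p q t :: nat
  assumes q: "prime q" and p: "\<not> q dvd p"
  shows "[p * t * (q - 1) = p] (mod q) \<longleftrightarrow> q dvd t + 1"
proof -
  have "[p * t * (q - 1) = p] (mod q) \<longleftrightarrow> int q dvd int (p * t * (q - 1)) - int p"
    by (simp add: cong_iff_dvd_diff flip: cong_int_iff)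
  also have "int (p * t * (q - 1)) - int p = int q * int (p * t) - int (p * (t + 1))"
    using prime_ge_1_nat[OF q] by (simp add: of_nat_diff algebra_simps)
  also have "int q dvd \<dots> \<longleftrightarrow> q dvd p * (t + 1)"
    by (simp only: dvd_diff_right_iff dvd_triv_left of_nat_dvd_iff)
  also have "\<dots> \<longleftrightarrow> q dvd t + 1"
    using p prime_dvd_mult_iff[OF q, of p "t + 1"] by blast
  finally show ?thesis .
qed

lemma S_self_cong_other_prime_iff:
  fixes p q Q :: nat
  assumes p: "prime p" and q: "prime q" "q dvd Q" "q \<noteq> p" and Q: "Q > 0"
  shows "[S (p * Q) (p * Q) = p] (mod q) \<longleftrightarrow> (q - 1) dvd p * Q \<and> q dvd Q div q + 1"
proof -
  have qp: "\<not> q dvd p" using p q primes_dvd_imp_eq by blast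
  have n: "q dvd p * Q" "p * Q > 0" using q(2) Q prime_gt_0_nat[OF p] by simp_all
  have cofactor: "p * Q div q = p * (Q div q)" using q(2) by (simp add: div_mult_swap)
  show ?thesis
  proof (cases "(q - 1) dvd p * Q")
    case True
    with S_self_cong[OF q(1) n] cofactor
    have "[S (p * Q) (p * Q) = p * (Q div q) * (q - 1)] (mod q)" by simp
    then show ?thesis
      using True cong_mult_pred_prime_iff[OF q(1) qp] by (metis cong_sym cong_trans)
  next
    case False
    with S_self_cong[OF q(1) n] have "[S (p * Q) (p * Q) = 0] (mod q)" by simp
    moreover have "\<not> [0 = p] (mod q)" using qp by (metis cong_0_iff cong_sym)
    ultimately show ?thesis using False by (metis cong_sym cong_trans)
  qed
qed

lemma S_self_cong_own_prime_iff:
  fixes p Q :: nat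
  assumes p: "prime p" and Q: "Q > 0" "\<not> p dvd Q"
  shows "[S (p * Q) (p * Q) = p] (mod p) \<longleftrightarrow> \<not> (p - 1) dvd Q"
proof -
  define c where "c = (if (p - 1) dvd Q then p - 1 else 0)"
  have "(p - 1) dvd p * Q \<longleftrightarrow> (p - 1) dvd Q"
    using coprime_diff_one_left_nat[of p] prime_gt_0_nat[OF p] by (simp add: coprime_dvd_mult_right_iff)
  then have "[S (p * Q) (p * Q) = Q * c] (mod p)"
    using S_self_cong[OF p, of "p * Q"] Q prime_gt_0_nat[OF p] by (simp add: c_def)
  moreover have "[p = 0] (mod p)" by (simp add: cong_0_iff)
  ultimately have "[S (p * Q) (p * Q) = p] (mod p) \<longleftrightarrow> p dvd Q * c"
    by (metis cong_0_iff cong_sym cong_trans)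
  also have "\<dots> \<longleftrightarrow> p dvd c" using p Q(2) by (simp add: prime_dvd_mult_iff)
  also have "\<dots> \<longleftrightarrow> \<not> (p - 1) dvd Q"
    using prime_ge_2_nat[OF p] by (auto simp: c_def dest: dvd_imp_le)
  finally show ?thesis .
qed

lemma M1_iff_squarefree_prime_congs:
  fixes p Q :: nat
  assumes p: "prime p" and Q: "Q > 0"
  shows "p * Q \<in> M1 p \<longleftrightarrow>
    squarefree (p * Q) \<and> (\<forall>q. prime q \<longrightarrow> q dvd p * Q \<longrightarrow> [S (p * Q) (p * Q) = p] (mod q))"
proof -
  let ?n = "p * Q"
  have n: "?n > 0" using Q prime_gt_0_nat[OF p] by simp
  have M1: "?n \<in> M1 p \<longleftrightarrow> [S ?n ?n = p] (mod ?n) \<and> \<not> p ^ 2 dvd ?n"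
    using n by (simp add: M1_def M_def cong_int_iff)
  have "squarefree ?n" if cong: "[S ?n ?n = p] (mod ?n)" and p2: "\<not> p ^ 2 dvd ?n"
  proof -
    have "\<not> q ^ 2 dvd ?n" if q: "prime q" for q
    proof
      assume sq: "q ^ 2 dvd ?n"
      then have qn: "q dvd ?n" by (meson dvd_power dvd_trans prime_gt_0_nat[OF q] zero_less_numeral)
      from sq obtain c where "?n = q ^ 2 * c" by blast
      then have "q dvd ?n div q" using prime_gt_0_nat[OF q] by (simp add: power2_eq_square)
      then have "[S ?n ?n = 0] (mod q)"
        using S_self_cong[OF q qn n] by (metis cong_0_iff cong_trans dvd_mult2)
      moreover have "[S ?n ?n = p] (mod q)" using cong qn by (rule cong_dvd_modulus_nat)
      ultimately have "q dvd p" by (metis cong_0_iff cong_sym cong_trans)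
      then have "q = p" using q p primes_dvd_imp_eq by blast
      with sq p2 show False by simp
    qed
    then show ?thesis using n by (subst squarefree_factorial_semiring) auto
  qed
  moreover have "\<not> p ^ 2 dvd ?n" if "squarefree ?n"
    using that p by (auto dest: squarefreeD)
  ultimately show ?thesis
    using M1 squarefree_cong_iff_prime_cong by blast
qed

lemma M1_iff_W_frakn:
  fixes p Q :: nat
  assumes p: "prime p" and Q: "Q > 0"
  shows "p * Q \<in> M1 p \<longleftrightarrow> Q \<in> W \<and> frakn Q dvd p \<and> \<not> p dvd Q \<and> \<not> (p - 1) dvd Q"
proof -
  have "prime q \<and> q dvd p * Q \<longleftrightarrow> q = p \<or> (prime q \<and> q dvd Q \<and> q \<noteq> p)" if "\<not> p dvd Q" for q
    using p that by (auto simp: prime_dvd_mult_iff dest: primes_dvd_imp_eq[OF _ p])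
  then have "p * Q \<in> M1 p \<longleftrightarrow> squarefree Q \<and> \<not> p dvd Q \<and> \<not> (p - 1) dvd Q \<and>
      (\<forall>q. prime q \<longrightarrow> q dvd Q \<longrightarrow> (q - 1) dvd p * Q \<and> q dvd Q div q + 1)"
    using M1_iff_squarefree_prime_congs[OF p Q] squarefree_prime_mult_iff[OF p]
      S_self_cong_own_prime_iff[OF p Q] S_self_cong_other_prime_iff[OF p _ _ _ Q]
    by (smt (verit))
  then show ?thesis
    using W_iff[OF Q] frakn_dvd_iff[OF Q] by blast
qed

lemma prime_pred_dvd_1806:
  fixes r :: nat
  assumes r: "prime r" and dvd: "(r - 1) dvd 1806"
  shows "r \<in> {2, 3, 7, 43}"
proof -
  have primes: "prime (2::nat)" "prime (3::nat)" "prime (7::nat)" "prime (43::nat)"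
    by code_simp+
  have "(r - 1) dvd 2 * (3 * (7 * 43))" using dvd by simp
  then obtain a m where am: "r - 1 = a * m" "a dvd 2" "m dvd 3 * (7 * 43)"
    using division_decomp by blast
  then obtain b m' where bm: "m = b * m'" "b dvd 3" "m' dvd 7 * 43"
    using division_decomp by blast
  then obtain c d where cd: "m' = c * d" "c dvd 7" "d dvd 43"
    using division_decomp by blast
  have divisor: "x \<in> {1, q}" if "prime q" "x dvd q" for x q :: nat
    using that unfolding prime_nat_iff by blast
  have "a \<in> {1, 2}" "b \<in> {1, 3}" "c \<in> {1, 7}" "d \<in> {1, 43}"
    using divisor primes am(2) bm(2) cd(2,3) by blast+
  moreover have "r = a * (b * (c * d)) + 1" using am bm cd prime_gt_0_nat[OF r] by simp
  ultimately have "r \<in> {2, 3, 4, 7, 8, 15, 22, 43, 44, 87, 130, 259, 302, 603, 904, 1807}"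
    by auto
  moreover have "\<forall>x \<in> {4, 8, 15, 22, 44, 87, 130, 259, 302, 603, 904, 1807 :: nat}. \<not> prime x"
    by code_simp
  then have "r \<notin> {4, 8, 15, 22, 44, 87, 130, 259, 302, 603, 904, 1807}"
    using r by blast
  ultimately show ?thesis by blast
qed

lemma sylvester_step:
  fixes r :: nat
  assumes r: "prime r" and sq: "squarefree (r - 1)"
    and factors: "\<forall>s. prime s \<longrightarrow> s dvd r - 1 \<longrightarrow> s \<in> {2, 3, 7, 43}"
  shows "r \<in> {2, 3, 7, 43}"
proof -
  have "(r - 1) dvd 1806"
    using factors by (subst squarefree_dvd_iff_prime_dvd[OF sq]) auto
  with r show ?thesis by (rule prime_pred_dvd_1806)
qed

text \<open>The bound \<open>B\<close> is \<open>p\<close> when \<open>p | Q\<close> and \<open>frakn Q | p\<close>, and \<open>Q\<close> itself when \<open>frakn Q = 1\<close>.\<close>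
lemma prime_factor_in_sylvester_primes:
  fixes Q B r :: nat
  assumes sq: "squarefree Q"
    and pred_dvd: "\<And>q. prime q \<Longrightarrow> q dvd Q \<Longrightarrow> q \<le> B \<Longrightarrow> (q - 1) dvd Q"
    and r: "prime r" "r dvd Q" "r \<le> B"
  shows "r \<in> {2, 3, 7, 43}"
  using r
proof (induction r rule: less_induct)
  case (less r)
  have d: "(r - 1) dvd Q" using pred_dvd less.prems by blast
  show ?case
  proof (rule sylvester_step[OF less.prems(1) squarefree_mono[OF d sq]], intro allI impI)
    fix s assume s: "prime s" "s dvd r - 1"
    have "s < r"
      using s(2) prime_gt_1_nat[OF less.prems(1)] by (auto dest: dvd_imp_le)
    moreover have "s dvd Q" using s(2) d by (rule dvd_trans)
    ultimately show "s \<in> {2, 3, 7, 43}"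
      using less.IH s(1) less.prems(3) by simp
  qed
qed

lemma not_dvd_if_frakn_dvd:
  fixes p Q :: nat
  assumes p: "prime p" "p \<notin> {2, 3, 7, 43}" and Q: "Q \<in> W" and frak: "frakn Q dvd p"
  shows "\<not> p dvd Q"
proof
  assume pQ: "p dvd Q"
  have Q0: "Q > 0" using Q by (simp add: W_def)
  have "(q - 1) dvd Q" if q: "prime q" "q dvd Q" "q \<le> p" for q
  proof -
    have "(q - 1) dvd p * Q" using frakn_dvd_iff[OF Q0] frak q by blast
    moreover have "\<not> p dvd q - 1"
      using q(3) prime_gt_1_nat[OF q(1)] by (auto dest: dvd_imp_le)
    then have "coprime (q - 1) p"
      using prime_imp_coprime[OF p(1)] coprime_commute by blast
    ultimately show ?thesis by (simp add: coprime_dvd_mult_right_iff)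
  qed
  with W_iff[OF Q0] Q p(1) pQ have "p \<in> {2, 3, 7, 43}"
    using prime_factor_in_sylvester_primes[of Q p p] by blast
  with p(2) show False ..
qed

lemma pred_not_dvd_if_frakn_eq_1:
  fixes p Q :: nat
  assumes p: "prime p" "p \<notin> {2, 3, 7, 43}" and Q: "Q \<in> W" and frak: "frakn Q = 1"
  shows "\<not> (p - 1) dvd Q"
proof
  assume pQ: "(p - 1) dvd Q"
  have Q0: "Q > 0" using Q by (simp add: W_def)
  have sq: "squarefree Q" using W_iff[OF Q0] Q by blast
  have "(q - 1) dvd Q" if "prime q" "q dvd Q" for q
    using frakn_dvd_iff[OF Q0, of 1] frak that by simp
  then have "s \<in> {2, 3, 7, 43}" if "prime s" "s dvd Q" for s
    using prime_factor_in_sylvester_primes[OF sq, of Q s] that Q0 dvd_imp_le by blast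
  then have "p \<in> {2, 3, 7, 43}"
    using sylvester_step[OF p(1) squarefree_mono[OF pQ sq]] pQ dvd_trans by blast
  with p(2) show False ..
qed

theorem mainTheorem18:
  fixes p n :: nat
  assumes "prime p" and "p \<notin> {2, 3, 7, 43}" and "n > 0" and "p dvd n"
  shows "n \<in> M1 p \<longleftrightarrow>
    (n div p \<in> W \<and> frakn (n div p) dvd p \<and> \<not> (frakn (n div p) - 1) dvd (n div p))"
proof -
  define Q where "Q = n div p"
  have n: "n = p * Q" using assms(4) by (simp add: Q_def)
  have Q: "Q > 0" using assms(3) n by (cases Q) auto
  have "n \<in> M1 p \<longleftrightarrow> Q \<in> W \<and> frakn Q dvd p \<and> \<not> p dvd Q \<and> \<not> (p - 1) dvd Q"
    using M1_iff_W_frakn[OF assms(1) Q] by (simp only: n)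
  moreover have "\<not> p dvd Q \<and> \<not> (p - 1) dvd Q \<longleftrightarrow> \<not> (frakn Q - 1) dvd Q"
    if W: "Q \<in> W" and frak: "frakn Q dvd p"
  proof -
    have "frakn Q = 1 \<or> frakn Q = p" using frak assms(1) prime_nat_iff by blast
    then show ?thesis
      using not_dvd_if_frakn_dvd[OF assms(1,2) W frak] pred_not_dvd_if_frakn_eq_1[OF assms(1,2) W] Q
      by auto
  qed
  ultimately show ?thesis unfolding Q_def[symmetric] by blast
qed

end
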